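(* Consider an $N$-player quadratic game with costs $J_m(x)=\frac12 x^\top Q_m x+b_m^\top x+p_m$, where $Q_m\in\mathbb{R}^{N\times N}$ is symmetric, $b_m\in\mathbb{R}^N$, $p_m\in\mathbb{R}$. Let players $1,\dots,n$ be deceptive, each $i\in[n]$ deceiving a nonempty set $\mathcal{D}_i\subset[N]\setminus\{i\}$, and let $\delta=(\delta_1,\dots,\delta_n)\in\mathbb{R}^n$ be fixed. Let $\bar\omega_1,\dots,\bar\omega_N$ be pairwise distinct positive rationals, $T>0$ a common period of all $\sin(\bar\omega_m\tau)$, and $\tilde\mu$ defined by $\tilde\mu_m(\tau)=\sin(\bar\omega_m\tau)+\delta_m\sum_{j\in\mathcal{D}_m}\sin(\bar\omega_j\tau)$ for $m\in[n]$ and $\tilde\mu_m(\tau)=\sin(\bar\omega_m\tau)$ for $m\notin[n]$. Then for every $a>0$, $k>0$, $u\in\mathbb{R}^N$ and $m\in[N]$, $$\frac{1}{T}\int_0^T -\frac{2k}{a}J_m\big(u+a\tilde\mu(\tau)\big)\sin(\bar\omega_m\tau)\,d\tau=-k\big(\mathcal{Q}_\delta u+\mathcal{B}_\delta\big)_m$$ exactly (with no remainder term), where $\mathcal{Q}_\delta\in\mathbb{R}^{N\times N}$ has $m$-th row $(Q_m)_{m:}+\sum_{j\in[n]:\,m\in\mathcal{D}_j}\delta_j (Q_m)_{j:}$ and $\mathcal{B}_\delta\in\mathbb{R}^N$ has $m$-th entry $(b_m)_m+\sum_{j\in[n]:\,m\in\mathcal{D}_j}\delta_j (b_m)_j$.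
   Context: For a matrix $Q$, $(Q)_{j:}$ denotes its $j$-th row; for a vector $b$, $(b)_j$ its $j$-th entry. *)

theory Defs
  imports "HOL-Analysis.Analysis"
begin

text \<open>Players are indexed by 1..N; the deceptive players are 1..n.
  Vectors in R^N are functions nat => real (only indices 1..N matter);
  the matrix Q_m is Q m :: nat => nat => real, the vector b_m is b m.\<close>

definition quad_cost ::
  "nat \<Rightarrow> (nat \<Rightarrow> nat \<Rightarrow> nat \<Rightarrow> real) \<Rightarrow> (nat \<Rightarrow> nat \<Rightarrow> real) \<Rightarrow> (nat \<Rightarrow> real)
    \<Rightarrow> nat \<Rightarrow> (nat \<Rightarrow> real) \<Rightarrow> real" where
  "quad_cost N Q b p m x =
     1/2 * (\<Sum>i=1..N. \<Sum>j=1..N. x i * Q m i j * x j) + (\<Sum>i=1..N. b m i * x i) + p m"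

definition mu_tilde ::
  "nat \<Rightarrow> (nat \<Rightarrow> nat set) \<Rightarrow> (nat \<Rightarrow> real) \<Rightarrow> (nat \<Rightarrow> real) \<Rightarrow> nat \<Rightarrow> real \<Rightarrow> real" where
  "mu_tilde n D \<delta> \<omega> m \<tau> =
     (if m \<in> {1..n} then sin (\<omega> m * \<tau>) + \<delta> m * (\<Sum>j\<in>D m. sin (\<omega> j * \<tau>))
      else sin (\<omega> m * \<tau>))"

definition Q_delta ::
  "nat \<Rightarrow> (nat \<Rightarrow> nat set) \<Rightarrow> (nat \<Rightarrow> real) \<Rightarrow> (nat \<Rightarrow> nat \<Rightarrow> nat \<Rightarrow> real) \<Rightarrow> nat \<Rightarrow> nat \<Rightarrow> real" where
  "Q_delta n D \<delta> Q m l = Q m m l + (\<Sum>j\<in>{j\<in>{1..n}. m \<in> D j}. \<delta> j * Q m j l)"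

definition B_delta ::
  "nat \<Rightarrow> (nat \<Rightarrow> nat set) \<Rightarrow> (nat \<Rightarrow> real) \<Rightarrow> (nat \<Rightarrow> nat \<Rightarrow> real) \<Rightarrow> nat \<Rightarrow> real" where
  "B_delta n D \<delta> b m = b m m + (\<Sum>j\<in>{j\<in>{1..n}. m \<in> D j}. \<delta> j * b m j)"

end

theory Submission
  imports Defs
begin

text \<open>Expand \<open>J\<^sub>m(u + a \<mu>(\<tau>)) = J\<^sub>m(u) + a \<langle>g, \<mu>(\<tau>)\<rangle> + (a\<^sup>2/2) \<mu>(\<tau>)\<^sup>T Q\<^sub>m \<mu>(\<tau>)\<close>, where
  \<open>g = Q\<^sub>m u + b\<^sub>m\<close>, and write each \<open>\<mu>\<^sub>i(\<tau>)\<close> as a linear combination \<open>\<Sum>\<^sub>j C\<^sub>i\<^sub>j sin(\<omega>\<^sub>j \<tau>)\<close>.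
  After multiplying by \<open>sin(\<omega>\<^sub>m \<tau>)\<close> the constant and quadratic parts become sums of sines
  of integer combinations of the frequencies, all of which average to zero over a common
  period; in the linear part only \<open>sin\<^sup>2(\<omega>\<^sub>m \<tau>)\<close> survives, because the frequencies are
  distinct and positive. The average is therefore exactly \<open>(a/2) \<Sum>\<^sub>i g\<^sub>i C\<^sub>i\<^sub>m\<close>, which
  is the \<open>m\<close>-th entry of \<open>(Q\<^sub>\<delta> u + B\<^sub>\<delta>)/2\<close>.\<close>

definition full_turns :: "real \<Rightarrow> real \<Rightarrow> bool" where
  "full_turns T c \<longleftrightarrow> cos (c * T) = 1 \<and> sin (c * T) = 0"

lemma full_turns_add: "full_turns T x \<Longrightarrow> full_turns T y \<Longrightarrow> full_turns T (x + y)"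
  by (simp add: full_turns_def distrib_right cos_add sin_add)

lemma full_turns_diff: "full_turns T x \<Longrightarrow> full_turns T y \<Longrightarrow> full_turns T (x - y)"
  by (simp add: full_turns_def left_diff_distrib cos_diff sin_diff)

lemma full_turns_if_sin_periodic:
  assumes periodic: "\<And>\<tau>. sin (c * (\<tau> + T)) = sin (c * \<tau>)"
  shows "full_turns T c"
proof (cases "c = 0")
  case False
  have "sin (c * (pi / (2 * c) + T)) = sin (c * (pi / (2 * c)))"
    by (rule periodic)
  moreover have "c * (pi / (2 * c) + T) = pi / 2 + c * T" "c * (pi / (2 * c)) = pi / 2"
    using False by (simp_all add: field_simps)
  ultimately have "cos (c * T) = 1"
    using False by (simp add: sin_add)
  moreover have "sin (c * T) = 0"
    using periodic[of 0] by simp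
  ultimately show ?thesis
    by (simp add: full_turns_def)
qed (simp add: full_turns_def)

lemma has_integral_sin_full_turns:
  assumes "T \<ge> 0" "full_turns T c"
  shows "((\<lambda>\<tau>. sin (c * \<tau>)) has_integral 0) {0..T}"
proof (cases "c = 0")
  case False
  have "((\<lambda>\<tau>. sin (c * \<tau>)) has_integral (- cos (c * T) / c) - (- cos (c * 0) / c)) {0..T}"
  proof (rule fundamental_theorem_of_calculus[OF \<open>T \<ge> 0\<close>])
    fix x
    have "((\<lambda>\<tau>. - cos (c * \<tau>) / c) has_real_derivative sin (c * x)) (at x within {0..T})"
      using False by (auto intro!: derivative_eq_intros)
    then show "((\<lambda>\<tau>. - cos (c * \<tau>) / c) has_vector_derivative sin (c * x)) (at x within {0..T})"
      by (simp add: has_real_derivative_iff_has_vector_derivative)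
  qed
  then show ?thesis
    using assms(2) by (simp add: full_turns_def)
qed simp

lemma has_integral_cos_full_turns:
  assumes "T \<ge> 0" "full_turns T c"
  shows "((\<lambda>\<tau>. cos (c * \<tau>)) has_integral (if c = 0 then T else 0)) {0..T}"
proof (cases "c = 0")
  case True
  then show ?thesis
    using has_integral_const_real[of "1::real" 0 T] assms(1) by simp
next
  case False
  have "((\<lambda>\<tau>. cos (c * \<tau>)) has_integral (sin (c * T) / c) - (sin (c * 0) / c)) {0..T}"
  proof (rule fundamental_theorem_of_calculus[OF \<open>T \<ge> 0\<close>])
    fix x
    have "((\<lambda>\<tau>. sin (c * \<tau>) / c) has_real_derivative cos (c * x)) (at x within {0..T})"
      using False by (auto intro!: derivative_eq_intros)
    then show "((\<lambda>\<tau>. sin (c * \<tau>) / c) has_vector_derivative cos (c * x)) (at x within {0..T})"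
      by (simp add: has_real_derivative_iff_has_vector_derivative)
  qed
  then show ?thesis
    using assms(2) False by (simp add: full_turns_def)
qed

lemma has_integral_sin_times_sin_full_turns:
  assumes "T \<ge> 0" "full_turns T x" "full_turns T y"
  shows "((\<lambda>\<tau>. sin (x * \<tau>) * sin (y * \<tau>)) has_integral
           (if x = y then T / 2 else 0) - (if x + y = 0 then T / 2 else 0)) {0..T}"
proof -
  have product_to_sum: "sin (x * \<tau>) * sin (y * \<tau>)
      = 1/2 * cos ((x - y) * \<tau>) - 1/2 * cos ((x + y) * \<tau>)" for \<tau>
  proof -
    have "(x - y) * \<tau> = x * \<tau> - y * \<tau>" "(x + y) * \<tau> = x * \<tau> + y * \<tau>"
      by (simp_all add: algebra_simps)
    then show ?thesis
      by (simp only: sin_times_sin) simp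
  qed
  have "((\<lambda>\<tau>. 1/2 * cos ((x - y) * \<tau>) - 1/2 * cos ((x + y) * \<tau>)) has_integral
          1/2 * (if x - y = 0 then T else 0) - 1/2 * (if x + y = 0 then T else 0)) {0..T}"
    using assms full_turns_add full_turns_diff
    by (intro has_integral_diff has_integral_mult_right has_integral_cos_full_turns) auto
  then show ?thesis
    unfolding product_to_sum by (simp split: if_splits)
qed

lemma has_integral_sin_sin_sin_full_turns:
  assumes "T \<ge> 0" "full_turns T x" "full_turns T y" "full_turns T z"
  shows "((\<lambda>\<tau>. sin (x * \<tau>) * sin (y * \<tau>) * sin (z * \<tau>)) has_integral 0) {0..T}"
proof -
  have product_to_sum: "sin (x * \<tau>) * sin (y * \<tau>) * sin (z * \<tau>)
      = 1/4 * sin ((x - y + z) * \<tau>) - 1/4 * sin ((x - y - z) * \<tau>)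
        - (1/4 * sin ((x + y + z) * \<tau>) - 1/4 * sin ((x + y - z) * \<tau>))" for \<tau>
  proof -
    have "sin (x * \<tau>) * sin (y * \<tau>) * sin (z * \<tau>)
        = (cos (x * \<tau> - y * \<tau>) * sin (z * \<tau>) - cos (x * \<tau> + y * \<tau>) * sin (z * \<tau>)) / 2"
      by (simp add: sin_times_sin left_diff_distrib)
    moreover have "(x - y + z) * \<tau> = (x * \<tau> - y * \<tau>) + z * \<tau>"
      "(x - y - z) * \<tau> = (x * \<tau> - y * \<tau>) - z * \<tau>"
      "(x + y + z) * \<tau> = (x * \<tau> + y * \<tau>) + z * \<tau>"
      "(x + y - z) * \<tau> = (x * \<tau> + y * \<tau>) - z * \<tau>"
      by (simp_all add: algebra_simps)
    ultimately show ?thesis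
      by (simp only: cos_times_sin) (simp add: diff_divide_distrib)
  qed
  have quarter: "((\<lambda>\<tau>. 1/4 * sin (c * \<tau>)) has_integral 1/4 * 0) {0..T}" if "full_turns T c" for c
    using assms(1) that by (intro has_integral_mult_right has_integral_sin_full_turns)
  have "full_turns T (x - y + z)" "full_turns T (x - y - z)" "full_turns T (x + y + z)"
    "full_turns T (x + y - z)"
    using assms full_turns_add full_turns_diff by auto
  note parts = this[THEN quarter]
  show ?thesis
    unfolding product_to_sum
    using has_integral_diff[OF has_integral_diff[OF parts(1,2)] has_integral_diff[OF parts(3,4)]]
    by simp
qed

lemma has_integral_sin_combination_times_sin:
  fixes N m :: nat
  assumes "T \<ge> 0"
    and turns: "\<forall>j\<in>{1..N}. full_turns T (\<omega> j)"
    and pos: "\<forall>j\<in>{1..N}. \<omega> j > 0"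
    and inj: "inj_on \<omega> {1..N}"
    and m: "m \<in> {1..N}"
  shows "((\<lambda>\<tau>. (\<Sum>j=1..N. c j * sin (\<omega> j * \<tau>)) * sin (\<omega> m * \<tau>)) has_integral T / 2 * c m) {0..T}"
proof -
  have "((\<lambda>\<tau>. sin (\<omega> j * \<tau>) * sin (\<omega> m * \<tau>)) has_integral (if j = m then T / 2 else 0)) {0..T}"
    if j: "j \<in> {1..N}" for j
  proof -
    have "\<omega> j > 0" "\<omega> m > 0"
      using pos j m by auto
    moreover have "\<omega> j = \<omega> m \<longleftrightarrow> j = m"
      using inj j m by (auto dest: inj_onD)
    ultimately show ?thesis
      using has_integral_sin_times_sin_full_turns[OF \<open>T \<ge> 0\<close>, of "\<omega> j" "\<omega> m"] turns j m by simp
  qed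
  then have "((\<lambda>\<tau>. \<Sum>j=1..N. c j * (sin (\<omega> j * \<tau>) * sin (\<omega> m * \<tau>))) has_integral
               (\<Sum>j=1..N. c j * (if j = m then T / 2 else 0))) {0..T}"
    by (intro has_integral_sum has_integral_mult_right) auto
  moreover have "(\<Sum>j=1..N. c j * (if j = m then T / 2 else 0)) = T / 2 * c m"
    using m by (simp add: if_distrib cong: if_cong)
  ultimately show ?thesis
    by (simp only: sum_distrib_right mult.assoc)
qed

lemma has_integral_quadratic_form_sin_combination_times_sin:
  fixes N :: nat
  assumes "T \<ge> 0"
    and turns: "\<forall>j\<in>{1..N}. full_turns T (\<omega> j)" "full_turns T c"
  shows "((\<lambda>\<tau>. (\<Sum>i=1..N. \<Sum>j=1..N. (\<Sum>p=1..N. C i p * sin (\<omega> p * \<tau>)) * A i j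
                                  * (\<Sum>q=1..N. C j q * sin (\<omega> q * \<tau>))) * sin (c * \<tau>))
           has_integral 0) {0..T}"
proof -
  have "((\<lambda>\<tau>. \<Sum>i=1..N. \<Sum>j=1..N. \<Sum>p=1..N. \<Sum>q=1..N. C i p * A i j * C j q
             * (sin (\<omega> p * \<tau>) * sin (\<omega> q * \<tau>) * sin (c * \<tau>)))
          has_integral (\<Sum>i=1..N. \<Sum>j=1..N. \<Sum>p=1..N. \<Sum>q=1..N. C i p * A i j * C j q * 0)) {0..T}"
    using assms by (intro has_integral_sum has_integral_mult_right has_integral_sin_sin_sin_full_turns) auto
  then show ?thesis
    by (simp add: sum_distrib_left sum_distrib_right sum_product mult_ac)
qed

definition quad_cost_grad ::
  "nat \<Rightarrow> (nat \<Rightarrow> nat \<Rightarrow> nat \<Rightarrow> real) \<Rightarrow> (nat \<Rightarrow> nat \<Rightarrow> real) \<Rightarrow> nat \<Rightarrow> (nat \<Rightarrow> real) \<Rightarrow> nat \<Rightarrow> real"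
  where "quad_cost_grad N Q b m u i = (\<Sum>j=1..N. Q m i j * u j) + b m i"

lemma quad_cost_cong:
  "(\<And>i. i \<in> {1..N} \<Longrightarrow> x i = y i) \<Longrightarrow> quad_cost N Q b p m x = quad_cost N Q b p m y"
  unfolding quad_cost_def by simp

lemma quadratic_form_add:
  fixes A :: "nat \<Rightarrow> nat \<Rightarrow> real" and u v :: "nat \<Rightarrow> real"
  assumes sym: "\<forall>i\<in>{1..N}. \<forall>j\<in>{1..N}. A i j = A j i"
  shows "(\<Sum>i=1..N. \<Sum>j=1..N. (u i + v i) * A i j * (u j + v j)) =
           (\<Sum>i=1..N. \<Sum>j=1..N. u i * A i j * u j) + 2 * (\<Sum>i=1..N. (\<Sum>j=1..N. A i j * u j) * v i)
           + (\<Sum>i=1..N. \<Sum>j=1..N. v i * A i j * v j)"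
proof -
  have "(\<Sum>i=1..N. \<Sum>j=1..N. u i * A i j * v j) = (\<Sum>j=1..N. \<Sum>i=1..N. v j * A j i * u i)"
    using sym by (subst sum.swap) (intro sum.cong refl, auto simp: mult_ac)
  then show ?thesis
    by (simp add: algebra_simps sum.distrib sum_distrib_left sum_distrib_right)
qed

lemma quad_cost_shift:
  assumes sym: "\<forall>i\<in>{1..N}. \<forall>j\<in>{1..N}. Q m i j = Q m j i"
  shows "quad_cost N Q b p m (\<lambda>i. u i + a * v i) =
           quad_cost N Q b p m u + a * (\<Sum>i=1..N. quad_cost_grad N Q b m u i * v i)
           + a\<^sup>2 / 2 * (\<Sum>i=1..N. \<Sum>j=1..N. v i * Q m i j * v j)"
proof -
  have "(\<Sum>i=1..N. \<Sum>j=1..N. a * v i * Q m i j * (a * v j))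
      = a\<^sup>2 * (\<Sum>i=1..N. \<Sum>j=1..N. v i * Q m i j * v j)"
    by (simp add: sum_distrib_left power2_eq_square mult_ac)
  then show ?thesis
    unfolding quad_cost_def quad_cost_grad_def quadratic_form_add[OF sym]
    by (simp add: algebra_simps sum.distrib sum_distrib_left)
qed

definition deception_matrix :: "nat \<Rightarrow> (nat \<Rightarrow> nat set) \<Rightarrow> (nat \<Rightarrow> real) \<Rightarrow> nat \<Rightarrow> nat \<Rightarrow> real" where
  "deception_matrix n D \<delta> i j =
     (if i = j then 1 else 0) + (if i \<in> {1..n} \<and> j \<in> D i then \<delta> i else 0)"

lemma mu_tilde_eq_deception_matrix_sum:
  assumes D_sub: "\<forall>i\<in>{1..n}. D i \<subseteq> {1..N}"
    and i: "i \<in> {1..N}"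
  shows "mu_tilde n D \<delta> \<omega> i \<tau> = (\<Sum>j=1..N. deception_matrix n D \<delta> i j * sin (\<omega> j * \<tau>))"
proof -
  define D' where "D' = (if i \<in> {1..n} then D i else {})"
  have "D' \<subseteq> {1..N}"
    using D_sub by (auto simp: D'_def)
  have "(\<Sum>j=1..N. deception_matrix n D \<delta> i j * sin (\<omega> j * \<tau>))
      = (\<Sum>j=1..N. if i = j then sin (\<omega> j * \<tau>) else 0)
        + (\<Sum>j=1..N. if j \<in> D' then \<delta> i * sin (\<omega> j * \<tau>) else 0)"
    unfolding sum.distrib[symmetric]
    by (intro sum.cong refl) (auto simp: deception_matrix_def D'_def algebra_simps)
  also have "\<dots> = sin (\<omega> i * \<tau>) + \<delta> i * (\<Sum>j\<in>D'. sin (\<omega> j * \<tau>))"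
    using i \<open>D' \<subseteq> {1..N}\<close>
    by (simp add: sum.inter_restrict[symmetric] Int_absorb1 sum_distrib_left)
  also have "\<dots> = mu_tilde n D \<delta> \<omega> i \<tau>"
    by (simp add: mu_tilde_def D'_def)
  finally show ?thesis ..
qed

lemma sum_quad_cost_grad_deception_matrix:
  assumes "n \<le> N" "m \<in> {1..N}"
  shows "(\<Sum>i=1..N. quad_cost_grad N Q b m u i * deception_matrix n D \<delta> i m)
           = (\<Sum>l=1..N. Q_delta n D \<delta> Q m l * u l) + B_delta n D \<delta> b m"
proof -
  define S where "S = {j\<in>{1..n}. m \<in> D j}"
  define g where "g = quad_cost_grad N Q b m u"
  have "S \<subseteq> {1..N}"
    using assms(1) by (auto simp: S_def)
  have "(\<Sum>i=1..N. g i * deception_matrix n D \<delta> i m)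
      = (\<Sum>i=1..N. if i = m then g i else 0) + (\<Sum>i=1..N. if i \<in> S then \<delta> i * g i else 0)"
    unfolding sum.distrib[symmetric]
    by (intro sum.cong refl) (auto simp: deception_matrix_def S_def algebra_simps)
  also have "\<dots> = g m + (\<Sum>i\<in>S. \<delta> i * g i)"
    using assms(2) \<open>S \<subseteq> {1..N}\<close> by (simp add: sum.inter_restrict[symmetric] Int_absorb1)
  also have "\<dots> = (\<Sum>l=1..N. Q_delta n D \<delta> Q m l * u l) + B_delta n D \<delta> b m"
    unfolding Q_delta_def B_delta_def g_def quad_cost_grad_def S_def[symmetric]
    by (simp add: distrib_left distrib_right sum.distrib sum_distrib_left sum_distrib_right
        mult_ac sum.swap[of _ S])
  finally show ?thesis
    by (simp add: g_def)
qed

lemma has_integral_quad_cost_times_sin: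
  assumes sym: "\<forall>i\<in>{1..N}. \<forall>j\<in>{1..N}. Q m i j = Q m j i"
    and "T \<ge> 0"
    and turns: "\<forall>j\<in>{1..N}. full_turns T (\<omega> j)"
    and pos: "\<forall>j\<in>{1..N}. \<omega> j > 0"
    and inj: "inj_on \<omega> {1..N}"
    and m: "m \<in> {1..N}"
  shows "((\<lambda>\<tau>. quad_cost N Q b p m (\<lambda>i. u i + a * (\<Sum>j=1..N. C i j * sin (\<omega> j * \<tau>)))
                 * sin (\<omega> m * \<tau>))
           has_integral a * (T / 2) * (\<Sum>i=1..N. quad_cost_grad N Q b m u i * C i m)) {0..T}"
proof -
  define g where "g = quad_cost_grad N Q b m u"
  define v where "v i \<tau> = (\<Sum>j=1..N. C i j * sin (\<omega> j * \<tau>))" for i \<tau>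
  have linear: "(\<Sum>i=1..N. g i * v i \<tau>) = (\<Sum>j=1..N. (\<Sum>i=1..N. g i * C i j) * sin (\<omega> j * \<tau>))" for \<tau>
    unfolding v_def by (simp add: sum_distrib_left sum_distrib_right mult_ac, rule sum.swap)
  have "((\<lambda>\<tau>. quad_cost N Q b p m u * sin (\<omega> m * \<tau>)
              + a * ((\<Sum>i=1..N. g i * v i \<tau>) * sin (\<omega> m * \<tau>))
              + a\<^sup>2 / 2 * ((\<Sum>i=1..N. \<Sum>j=1..N. v i \<tau> * Q m i j * v j \<tau>) * sin (\<omega> m * \<tau>)))
         has_integral quad_cost N Q b p m u * 0 + a * (T / 2 * (\<Sum>i=1..N. g i * C i m)) + a\<^sup>2 / 2 * 0)
         {0..T}"
    unfolding linear unfolding v_def using assms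
    by (intro has_integral_add has_integral_mult_right has_integral_sin_full_turns
        has_integral_sin_combination_times_sin
        has_integral_quadratic_form_sin_combination_times_sin) auto
  then show ?thesis
    unfolding quad_cost_shift[where Q = Q and m = m, OF sym] g_def v_def by (simp add: algebra_simps)
qed

text \<open>Rationality of the frequencies only serves to make a common period \<open>T\<close> exist.\<close>
theorem mainTheorem2:
  fixes N n :: nat
    and Q :: "nat \<Rightarrow> nat \<Rightarrow> nat \<Rightarrow> real"
    and b :: "nat \<Rightarrow> nat \<Rightarrow> real"
    and p :: "nat \<Rightarrow> real"
    and D :: "nat \<Rightarrow> nat set"
    and \<delta> \<omega> :: "nat \<Rightarrow> real"
    and T a k :: real
    and u :: "nat \<Rightarrow> real"
    and m :: nat
  assumes Qsym: "\<forall>m\<in>{1..N}. \<forall>i\<in>{1..N}. \<forall>j\<in>{1..N}. Q m i j = Q m j i"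
    and nN: "n \<le> N"
    and D_sub: "\<forall>i\<in>{1..n}. D i \<subseteq> {1..N} - {i}"
    and D_ne: "\<forall>i\<in>{1..n}. D i \<noteq> {}"
    and \<omega>_rat: "\<forall>m\<in>{1..N}. \<omega> m \<in> \<rat>"
    and \<omega>_pos: "\<forall>m\<in>{1..N}. \<omega> m > 0"
    and \<omega>_dist: "\<forall>i\<in>{1..N}. \<forall>j\<in>{1..N}. i \<noteq> j \<longrightarrow> \<omega> i \<noteq> \<omega> j"
    and T_pos: "T > 0"
    and T_period: "\<forall>m\<in>{1..N}. \<forall>\<tau>. sin (\<omega> m * (\<tau> + T)) = sin (\<omega> m * \<tau>)"
    and a_pos: "a > 0" and k_pos: "k > 0"
    and m_in: "m \<in> {1..N}"
  shows "1 / T * integral {0..T}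
           (\<lambda>\<tau>. - (2 * k / a)
                  * quad_cost N Q b p m (\<lambda>i. u i + a * mu_tilde n D \<delta> \<omega> i \<tau>)
                  * sin (\<omega> m * \<tau>))
         = - k * ((\<Sum>l=1..N. Q_delta n D \<delta> Q m l * u l) + B_delta n D \<delta> b m)"
proof -
  define C where "C = deception_matrix n D \<delta>"
  define G where "G = (\<Sum>i=1..N. quad_cost_grad N Q b m u i * C i m)"
  have turns: "\<forall>j\<in>{1..N}. full_turns T (\<omega> j)"
    using T_period by (auto intro: full_turns_if_sin_periodic)
  have inj: "inj_on \<omega> {1..N}"
    using \<omega>_dist by (auto intro: inj_onI)
  have "\<forall>i\<in>{1..n}. D i \<subseteq> {1..N}"
    using D_sub by auto
  then have probe: "quad_cost N Q b p m (\<lambda>i. u i + a * mu_tilde n D \<delta> \<omega> i \<tau>)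
      = quad_cost N Q b p m (\<lambda>i. u i + a * (\<Sum>j=1..N. C i j * sin (\<omega> j * \<tau>)))" for \<tau>
    by (intro quad_cost_cong) (simp add: C_def mu_tilde_eq_deception_matrix_sum)
  have "((\<lambda>\<tau>. quad_cost N Q b p m (\<lambda>i. u i + a * mu_tilde n D \<delta> \<omega> i \<tau>) * sin (\<omega> m * \<tau>))
          has_integral a * (T / 2) * G) {0..T}"
    unfolding probe G_def using Qsym m_in T_pos \<omega>_pos turns inj
    by (intro has_integral_quad_cost_times_sin) auto
  then have "integral {0..T} (\<lambda>\<tau>. - (2 * k / a)
               * quad_cost N Q b p m (\<lambda>i. u i + a * mu_tilde n D \<delta> \<omega> i \<tau>) * sin (\<omega> m * \<tau>))
             = - (2 * k / a) * (a * (T / 2) * G)"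
    by (simp add: integral_unique has_integral_mult_right mult.assoc)
  moreover have "G = (\<Sum>l=1..N. Q_delta n D \<delta> Q m l * u l) + B_delta n D \<delta> b m"
    unfolding G_def C_def using nN m_in by (rule sum_quad_cost_grad_deception_matrix)
  ultimately show ?thesis
    using T_pos a_pos by simp
qed

end
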